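(* Let $\delta$ be $\mathfrak l_m$-dominant integral, $k\ge k'$ non-negative integers, $K\in\kappa(\delta,k)$, $K'\in\kappa(\delta,k')$, $K\ne K'$, and suppose $\chi_{\delta+\lambda_K}=\chi_{\delta+\lambda_{K'}}$ (so that $i:=i(\delta,k)$ is defined). Then there exists an $\mathfrak a_m$-dominant $\mathfrak a_m$-integral weight $\mu$ such that $\delta+\lambda_K=\mu[i-1]$ and $\delta+\lambda_{K'}=\mu[i]$.
   Context: $\mathfrak a_m\cong\mathfrak{sl}_{m+1}$ is the projective subalgebra $\mathrm{Span}\{\partial_{x_i},x_j\partial_{x_i},x_j\sum_rx_r\partial_{x_r}\}$ of polynomial vector fields on $\mathbb R^m$, with Cartan subalgebra $\mathfrak h_m=\mathrm{Span}\{x_i\partial_{x_i}\}$. Weights: $\mathfrak h_m^*=\{\lambda=\sum_{i=0}^m\lambda_i\epsilon_i:\sum\lambda_i=0\}$ with $\lambda(x_j\partial_{x_j})=\lambda_j$ ($1\le j\le m$). $\lambda$ is $\mathfrak a_m$-dominant integral if $\lambda_i-\lambda_{i+1}\in\mathbb N$ for $0\le i<m$, and $\mathfrak l_m$-dominant integral if this holds for $1\le i<m$. Let $\rho=\sum_{i=0}^m(\tfrac m2-i)\epsilon_i$; $S_{m+1}$ permutes indices $0,\dots,m$, $w\cdot\lambda=w(\lambda+\rho)-\rho$; $\chi_\lambda$ is the $\mathfrak a_m$-infinitesimal character attached to $\lambda$, with $\chi_\lambda=\chi_{\lambda'}$ iff $\lambda'\in S_{m+1}\cdot\lambda$. For $\mu\in\mathfrak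 h_m^*$, $\mu[0]=\mu$ and for $1\le i\le m$, $\mu[i]=w_i\cdot\mu$ where, writing $\sigma=\mu+\rho$, $\mu[i]+\rho=(\sigma_i,\sigma_0,\sigma_1,\dots,\sigma_{i-1},\sigma_{i+1},\dots,\sigma_m)$. For $K\in\mathbb N^m$: $|K|=\sum K_i$, $\lambda_K=|K|\epsilon_0-\sum_{i=1}^mK_i\epsilon_i$, $\kappa(\delta,k)=\{K\in\mathbb N^m:|K|=k,\ K_i\le\delta_i-\delta_{i+1}\text{ for }i<m\}$. For $\delta$: $i(\delta)\in\{1,\dots,m\}$ maximal with $\delta_1=\cdots=\delta_{i(\delta)}$; $\tilde\delta_i=\delta_i-i-\delta_0$; $\delta$ is resonant if $\tilde\delta_{i(\delta)}\in\mathbb Z^+$; for $\delta$ resonant, $k\in\mathbb Z^+$, $\tilde\delta_{i(\delta)}\ge k$, $i(\delta,k)\in\{i(\delta),\dots,m\}$ is maximal with $\tilde\delta_{i(\delta,k)}\ge k$. *)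

theory Defs
  imports "HOL-Analysis.Analysis" "HOL-Combinatorics.Permutations"
begin

(* Weights of h_m^* : functions nat => real, only indices 0..m are relevant;
   lambda_i is the coefficient of epsilon_i. *)
definition is_weight :: "nat \<Rightarrow> (nat \<Rightarrow> real) \<Rightarrow> bool" where
  "is_weight m la \<longleftrightarrow> (\<Sum>i=0..m. la i) = 0"

definition weq :: "nat \<Rightarrow> (nat \<Rightarrow> real) \<Rightarrow> (nat \<Rightarrow> real) \<Rightarrow> bool" where
  "weq m a b \<longleftrightarrow> (\<forall>i\<le>m. a i = b i)"

definition a_dom_int :: "nat \<Rightarrow> (nat \<Rightarrow> real) \<Rightarrow> bool" where
  "a_dom_int m la \<longleftrightarrow> (\<forall>i<m. la i - la (Suc i) \<in> \<nat>)"

definition l_dom_int :: "nat \<Rightarrow> (nat \<Rightarrow> real) \<Rightarrow> bool" where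
  "l_dom_int m la \<longleftrightarrow> (\<forall>i. 1 \<le> i \<and> i < m \<longrightarrow> la i - la (Suc i) \<in> \<nat>)"

definition rho :: "nat \<Rightarrow> nat \<Rightarrow> real" where
  "rho m i = real m / 2 - real i"

(* chi_la = chi_la' iff la' \<in> S_{m+1} . la (dot action w.la = w(la+rho)-rho) *)
definition same_inf_char :: "nat \<Rightarrow> (nat \<Rightarrow> real) \<Rightarrow> (nat \<Rightarrow> real) \<Rightarrow> bool" where
  "same_inf_char m la la' \<longleftrightarrow>
     (\<exists>p. p permutes {0..m} \<and> (\<forall>i\<le>m. la' i + rho m i = la (p i) + rho m (p i)))"

definition wshift :: "nat \<Rightarrow> (nat \<Rightarrow> real) \<Rightarrow> nat \<Rightarrow> (nat \<Rightarrow> real)" where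
  "wshift m mu i = (\<lambda>j. (let sigma = (\<lambda>t. mu t + rho m t) in
      if j = 0 then sigma i else if j \<le> i then sigma (j - 1) else sigma j) - rho m j)"

(* K \<in> N^m indexed by 1..m (K j = 0 outside 1..m) *)
definition normK :: "nat \<Rightarrow> (nat \<Rightarrow> nat) \<Rightarrow> nat" where
  "normK m K = (\<Sum>i=1..m. K i)"

definition lamK :: "nat \<Rightarrow> (nat \<Rightarrow> nat) \<Rightarrow> (nat \<Rightarrow> real)" where
  "lamK m K = (\<lambda>j. if j = 0 then real (normK m K) else - real (K j))"

definition kappa :: "nat \<Rightarrow> (nat \<Rightarrow> real) \<Rightarrow> nat \<Rightarrow> (nat \<Rightarrow> nat) set" where
  "kappa m de k = {K. (\<forall>j. (j = 0 \<or> m < j) \<longrightarrow> K j = 0) \<and> normK m K = k \<and>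
      (\<forall>i. 1 \<le> i \<and> i < m \<longrightarrow> real (K i) \<le> de i - de (Suc i))}"

definition idelta :: "nat \<Rightarrow> (nat \<Rightarrow> real) \<Rightarrow> nat" where
  "idelta m de = (GREATEST i. 1 \<le> i \<and> i \<le> m \<and> (\<forall>j. 1 \<le> j \<and> j \<le> i \<longrightarrow> de j = de 1))"

definition dtilde :: "(nat \<Rightarrow> real) \<Rightarrow> nat \<Rightarrow> real" where
  "dtilde de i = de i - real i - de 0"

definition idelta_k :: "nat \<Rightarrow> (nat \<Rightarrow> real) \<Rightarrow> nat \<Rightarrow> nat" where
  "idelta_k m de k = (GREATEST i. idelta m de \<le> i \<and> i \<le> m \<and> dtilde de i \<ge> real k)"

end

(*
  Put sigma = delta + lambda_K + rho and sigma' = delta + lambda_K' + rho.  The bounds defining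
  kappa(delta, k) and the l_m-dominance of delta make both strictly decreasing with integral gaps on
  the indices 1..m, and equality of the infinitesimal characters says that sigma' is a rearrangement
  of sigma.  Counting the entries above a given level shows that a strictly decreasing tail is
  determined by the multiset of all entries together with the head.  As K <> K', this forces k' < k,
  and then sigma' arises from sigma by swapping the entries at 0 and at some a >= 1; the bound
  K_(a-1) <= delta_(a-1) - delta_a keeps the old head from landing further left.  From
  sigma'_a = sigma_0 one reads off tilde-delta_a = k + K'_a, which pins down a = i(delta, k).
  Finally mu + rho := sigma with its head moved to position a - 1 is regular dominant, so mu is
  a_m-dominant integral, and by construction mu[a-1] = delta + lambda_K, mu[a] = delta + lambda_K'.
*)

theory Submission
  imports Defs
begin

subsection \<open>Shifted weights\<close>

definition plus_rho :: "nat \<Rightarrow> (nat \<Rightarrow> real) \<Rightarrow> nat \<Rightarrow> real" where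
  "plus_rho m la j = la j + rho m j"

definition regular_dominant_on :: "nat set \<Rightarrow> (nat \<Rightarrow> real) \<Rightarrow> bool" where
  "regular_dominant_on I \<sigma> \<longleftrightarrow> (\<forall>i\<in>I. \<sigma> i - \<sigma> (Suc i) - 1 \<in> \<nat>)"

lemma a_dom_int_iff_regular_dominant_on:
  "a_dom_int m mu \<longleftrightarrow> regular_dominant_on {..<m} (plus_rho m mu)"
  by (auto simp: a_dom_int_def regular_dominant_on_def plus_rho_def rho_def algebra_simps)

lemma is_weight_iff_sum_plus_rho:
  "is_weight m la \<longleftrightarrow> (\<Sum>j=0..m. plus_rho m la j) = (\<Sum>j=0..m. rho m j)"
  by (simp add: is_weight_def plus_rho_def sum.distrib)

lemma weq_iff_plus_rho: "weq m la la' \<longleftrightarrow> (\<forall>j\<le>m. plus_rho m la j = plus_rho m la' j)"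
  by (simp add: weq_def plus_rho_def)

definition move_first :: "nat \<Rightarrow> (nat \<Rightarrow> 'a) \<Rightarrow> nat \<Rightarrow> 'a" where
  "move_first i \<sigma> j = (if j < i then \<sigma> (Suc j) else if j = i then \<sigma> 0 else \<sigma> j)"

definition move_to_front :: "nat \<Rightarrow> (nat \<Rightarrow> 'a) \<Rightarrow> nat \<Rightarrow> 'a" where
  "move_to_front i \<sigma> j = (if j = 0 then \<sigma> i else if j \<le> i then \<sigma> (j - 1) else \<sigma> j)"

lemma plus_rho_wshift: "plus_rho m (wshift m mu i) = move_to_front i (plus_rho m mu)"
  by (simp add: fun_eq_iff plus_rho_def wshift_def move_to_front_def)

lemma move_to_front_move_first: "move_to_front i (move_first i \<sigma>) = \<sigma>"
  by (auto simp: fun_eq_iff move_to_front_def move_first_def)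

lemma move_to_front_Suc_move_first:
  "move_to_front (Suc i) (move_first i \<sigma>) = \<sigma> \<circ> Transposition.transpose 0 (Suc i)"
  by (auto simp: fun_eq_iff move_to_front_def move_first_def Transposition.transpose_def)

lemma sum_move_first:
  fixes \<sigma> :: "nat \<Rightarrow> 'a::comm_monoid_add"
  assumes "i \<le> m"
  shows "(\<Sum>j=0..m. move_first i \<sigma> j) = (\<Sum>j=0..m. \<sigma> j)"
  using assms
proof (induction m)
  case 0
  then show ?case by (simp add: move_first_def)
next
  case (Suc m)
  show ?case
  proof (cases "i \<le> m")
    case True
    then show ?thesis using Suc by (simp add: move_first_def)
  next
    case False
    then have "i = Suc m" using Suc.prems by simp
    then have "(\<Sum>j=0..Suc m. move_first i \<sigma> j) = (\<Sum>j=0..m. \<sigma> (Suc j)) + \<sigma> 0"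
      by (simp add: move_first_def)
    also have "\<dots> = (\<Sum>j=0..Suc m. \<sigma> j)"
      by (simp only: sum.atLeast0_atMost_Suc_shift o_def add.commute)
    finally show ?thesis .
  qed
qed

lemma regular_dominant_on_move_first:
  assumes reg: "regular_dominant_on {1..<m} \<sigma>" "regular_dominant_on {1..<m} \<sigma>'"
    and swap: "\<forall>j\<le>m. \<sigma>' j = \<sigma> (Transposition.transpose 0 a j)"
    and gap: "\<sigma> 0 - \<sigma>' 0 - 1 \<in> \<nat>" and a: "1 \<le> a" "a \<le> m"
  shows "regular_dominant_on {..<m} (move_first (a - 1) \<sigma>)"
  unfolding regular_dominant_on_def
proof
  fix i assume "i \<in> {..<m}"
  then have i: "i < m" by simp
  consider "Suc (Suc i) < a" | "Suc (Suc i) = a" | "Suc i = a" | "a \<le> i"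
    by linarith
  then show "move_first (a - 1) \<sigma> i - move_first (a - 1) \<sigma> (Suc i) - 1 \<in> \<nat>"
  proof cases
    case 1
    then show ?thesis
      using reg(1) a unfolding regular_dominant_on_def move_first_def by auto
  next
    case 2
    have "Suc i \<in> {1..<m}"
      using 2 a by simp
    then have "\<sigma>' (Suc i) - \<sigma>' (Suc (Suc i)) - 1 \<in> \<nat>"
      using reg(2) unfolding regular_dominant_on_def by blast
    moreover have "\<sigma>' (Suc i) = \<sigma> (Suc i)" "\<sigma>' (Suc (Suc i)) = \<sigma> 0"
      using swap 2 a by auto
    moreover have "a - 1 = Suc i"
      using 2 by simp
    ultimately show ?thesis
      unfolding move_first_def by simp
  next
    case 3
    then show ?thesis
      using gap swap a unfolding move_first_def by auto
  next
    case 4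
    then show ?thesis
      using reg(1) a i unfolding regular_dominant_on_def move_first_def by auto
  qed
qed

lemma ex_a_dom_int_wshift_transpose:
  assumes "is_weight m la" and a: "1 \<le> a" "a \<le> m"
    and reg: "regular_dominant_on {1..<m} (plus_rho m la)"
      "regular_dominant_on {1..<m} (plus_rho m la')"
    and swap: "\<forall>j\<le>m. plus_rho m la' j = plus_rho m la (Transposition.transpose 0 a j)"
    and gap: "plus_rho m la 0 - plus_rho m la' 0 - 1 \<in> \<nat>"
  shows "\<exists>mu. is_weight m mu \<and> a_dom_int m mu \<and>
           weq m la (wshift m mu (a - 1)) \<and> weq m la' (wshift m mu a)"
proof -
  define mu where "mu j = move_first (a - 1) (plus_rho m la) j - rho m j" for j
  have mu: "plus_rho m mu = move_first (a - 1) (plus_rho m la)"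
    by (simp add: fun_eq_iff mu_def plus_rho_def)
  have "is_weight m mu"
    using assms(1) sum_move_first[of "a - 1" m "plus_rho m la"] a
    by (simp add: is_weight_iff_sum_plus_rho mu)
  moreover have "a_dom_int m mu"
    unfolding a_dom_int_iff_regular_dominant_on mu
    using regular_dominant_on_move_first[OF reg swap gap a] .
  moreover have "weq m la (wshift m mu (a - 1))"
    by (simp add: weq_iff_plus_rho plus_rho_wshift mu move_to_front_move_first)
  moreover have "weq m la' (wshift m mu a)"
    using move_to_front_Suc_move_first[of "a - 1" "plus_rho m la"] swap a
    by (simp add: weq_iff_plus_rho plus_rho_wshift mu)
  ultimately show ?thesis by blast
qed

subsection \<open>Strictly decreasing sequences and their rearrangements\<close>

lemma strict_antimono_on_SucI:
  fixes f :: "nat \<Rightarrow> 'a::order"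
  assumes step: "\<And>j. a \<le> j \<Longrightarrow> j < b \<Longrightarrow> f (Suc j) < f j"
  shows "strict_antimono_on {a..b} f"
proof (rule monotone_onI)
  fix i j assume "i \<in> {a..b}" "j \<in> {a..b}" "i < j"
  then have "Suc i \<le> j" "a \<le> i" "j \<le> b" by auto
  then show "f j < f i"
  proof (induction j rule: dec_induct)
    case base
    then show ?case using step by simp
  next
    case (step n)
    have "f (Suc n) < f n" "f n < f i"
      using step assms[of n] by simp_all
    then show ?case by (rule less_trans)
  qed
qed

lemma regular_dominant_on_imp_strict_antimono_on:
  assumes "regular_dominant_on {a..<b} \<sigma>"
  shows "strict_antimono_on {a..b} \<sigma>"
proof (rule strict_antimono_on_SucI)
  fix j assume "a \<le> j" "j < b"
  then have "\<sigma> j - \<sigma> (Suc j) - 1 \<in> \<nat>"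
    using assms unfolding regular_dominant_on_def by simp
  then obtain n where "\<sigma> j - \<sigma> (Suc j) - 1 = real n"
    by (rule Nats_cases)
  then show "\<sigma> (Suc j) < \<sigma> j" by simp
qed

lemma card_Collect_permutes:
  assumes "p permutes A"
  shows "card {l\<in>A. Q (p l)} = card {l\<in>A. Q l}"
proof -
  have "{l\<in>A. Q (p l)} = p -` {l\<in>A. Q l}"
    using permutes_in_image[OF assms] by auto
  also have "card \<dots> = card {l\<in>A. Q l}"
    by (rule card_vimage_inj[OF permutes_inj[OF assms]]) (simp add: permutes_surj[OF assms])
  finally show ?thesis .
qed

lemma card_Collect_rearrangement:
  assumes "p permutes {0..m}" and "\<forall>l\<le>m. g l = f (p l)"
  shows "card {l\<in>{0..m}. P (g l)} = card {l\<in>{0..m}. P (f l)}"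
proof -
  have "{l\<in>{0..m}. P (g l)} = {l\<in>{0..m}. P (f (p l))}"
    using assms(2) by auto
  then show ?thesis
    using card_Collect_permutes[OF assms(1), of "\<lambda>v. P (f v)"] by simp
qed

lemma card_Collect_atLeast0AtMost:
  "card {l\<in>{0..m::nat}. P l} = card {l\<in>{1..m}. P l} + of_bool (P 0)"
proof (cases "P 0")
  case True
  then have "{l\<in>{0..m}. P l} = insert 0 {l\<in>{1..m}. P l}"
    by (auto simp: Suc_le_eq intro: gr0I)
  also have "card \<dots> = Suc (card {l\<in>{1..m}. P l})"
    by (rule card_insert_disjoint) auto
  finally show ?thesis using True by simp
next
  case False
  then have "{l\<in>{0..m}. P l} = {l\<in>{1..m}. P l}"
    by (auto simp: Suc_le_eq intro: gr0I)
  then show ?thesis using False by simp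
qed

lemma card_ge_iff_strict_antimono_on:
  fixes f :: "nat \<Rightarrow> 'a::linorder"
  assumes f: "strict_antimono_on {1..m} f" and j: "1 \<le> j" "j \<le> m"
  shows "j \<le> card {l\<in>{1..m}. x \<le> f l} \<longleftrightarrow> x \<le> f j"
proof
  have le: "f l \<le> f j" if "l \<in> {1..m}" "j \<le> l" for l
    using monotone_onD[OF f, of j l] that j by (cases "j = l") auto
  have ge: "f j \<le> f l" if "l \<in> {1..m}" "l \<le> j" for l
    using monotone_onD[OF f, of l j] that j by (cases "j = l") auto
  show "x \<le> f j" if "j \<le> card {l\<in>{1..m}. x \<le> f l}"
  proof (rule ccontr)
    assume "\<not> x \<le> f j"
    have "l < j" if "l \<in> {1..m}" "x \<le> f l" for l
    proof (rule ccontr)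
      assume "\<not> l < j"
      then have "x \<le> f j"
        using le[OF that(1)] that(2) by (simp add: not_less)
      with \<open>\<not> x \<le> f j\<close> show False ..
    qed
    then have "{l\<in>{1..m}. x \<le> f l} \<subseteq> {1..<j}"
      by auto
    then have "card {l\<in>{1..m}. x \<le> f l} \<le> j - 1"
      using card_mono[of "{1..<j}"] by fastforce
    with that j show False by linarith
  qed
  show "j \<le> card {l\<in>{1..m}. x \<le> f l}" if "x \<le> f j"
  proof -
    have "{1..j} \<subseteq> {l\<in>{1..m}. x \<le> f l}"
      using ge that j by (auto intro: order_trans)
    then show ?thesis
      using card_mono[of "{l\<in>{1..m}. x \<le> f l}" "{1..j}"] by simp
  qed
qed

lemma strict_antimono_rearrangement_eq:
  fixes f g :: "nat \<Rightarrow> 'a::linorder"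
  assumes f: "strict_antimono_on {1..m} f" and g: "strict_antimono_on {1..m} g"
    and p: "p permutes {0..m}" and gp: "\<forall>l\<le>m. g l = f (p l)" and "g 0 = f 0"
    and j: "1 \<le> j" "j \<le> m"
  shows "g j = f j"
proof -
  have "card {l\<in>{1..m}. x \<le> g l} = card {l\<in>{1..m}. x \<le> f l}" for x
    using card_Collect_rearrangement[OF p gp, of "\<lambda>v. x \<le> v"] \<open>g 0 = f 0\<close>
    unfolding card_Collect_atLeast0AtMost by simp
  then have "x \<le> g j \<longleftrightarrow> x \<le> f j" for x
    using card_ge_iff_strict_antimono_on[OF g j] card_ge_iff_strict_antimono_on[OF f j] by metis
  then show ?thesis by (meson order_antisym order_refl)
qed

lemma rearrangement_head_lt:
  fixes f g :: "nat \<Rightarrow> 'a::linorder"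
  assumes f: "strict_antimono_on {1..m} f" and g: "strict_antimono_on {1..m} g"
    and p: "p permutes {0..m}" and gp: "\<forall>l\<le>m. g l = f (p l)"
    and j: "1 \<le> j" "j < m" and "x \<le> f j" "g 0 < x" "g (Suc j) < x"
  shows "f 0 < x"
proof (rule ccontr)
  assume "\<not> f 0 < x"
  then have "Suc j \<le> card {l\<in>{0..m}. x \<le> f l}"
    using card_ge_iff_strict_antimono_on[OF f, of j x] j \<open>x \<le> f j\<close>
    unfolding card_Collect_atLeast0AtMost by simp
  moreover have "\<not> Suc j \<le> card {l\<in>{1..m}. x \<le> g l}"
    using card_ge_iff_strict_antimono_on[OF g, of "Suc j" x] j \<open>g (Suc j) < x\<close> by simp
  then have "card {l\<in>{0..m}. x \<le> g l} \<le> j"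
    using \<open>g 0 < x\<close> unfolding card_Collect_atLeast0AtMost by (auto dest: leD)
  ultimately show False
    using card_Collect_rearrangement[OF p gp, of "\<lambda>v. x \<le> v"] by simp
qed

lemma strict_antimono_on_transpose:
  fixes f :: "nat \<Rightarrow> 'a::linorder"
  assumes f: "strict_antimono_on {1..m} f" and a: "1 \<le> a" "a \<le> m"
    and "f a < f 0" and "2 \<le> a \<Longrightarrow> f 0 < f (a - 1)"
  shows "strict_antimono_on {1..m} (f \<circ> Transposition.transpose 0 a)"
proof (rule strict_antimono_on_SucI)
  fix j assume j: "1 \<le> j" "j < m"
  have step: "f (Suc i) < f i" if "1 \<le> i" "i < m" for i
    using monotone_onD[OF f] that by simp
  consider "Suc j = a" | "j = a" | "Suc j \<noteq> a" "j \<noteq> a" by blast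
  then show "(f \<circ> Transposition.transpose 0 a) (Suc j) < (f \<circ> Transposition.transpose 0 a) j"
  proof cases
    case 1
    then show ?thesis using assms(5) j by auto
  next
    case 2
    then show ?thesis using step[OF j] \<open>f a < f 0\<close> j by auto
  next
    case 3
    then show ?thesis using step[OF j] j by auto
  qed
qed

text \<open>The hypothesis on \<open>g a\<close> keeps the old head \<open>f 0\<close> from being inserted to the left of
  position \<open>a\<close>.\<close>

lemma rearrangement_eq_transpose:
  fixes f g :: "nat \<Rightarrow> 'a::linorder"
  assumes f: "strict_antimono_on {1..m} f" and g: "strict_antimono_on {1..m} g"
    and p: "p permutes {0..m}" and gp: "\<forall>l\<le>m. g l = f (p l)" and a: "a = p 0"
    and "g 0 < f 0" and "2 \<le> a \<Longrightarrow> g a < f (a - 1)"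
  shows "1 \<le> a" "a \<le> m" "\<forall>j\<le>m. g j = f (Transposition.transpose 0 a j)"
proof -
  show am: "a \<le> m"
    using permutes_in_image[OF p, of 0] a by simp
  have ga: "g 0 = f a"
    using gp a by simp
  then show a1: "1 \<le> a"
    using \<open>g 0 < f 0\<close> by (cases a) auto
  have "f 0 < f (a - 1)" if "2 \<le> a"
  proof (rule rearrangement_head_lt[OF f g p gp])
    have "a - 1 \<in> {1..m}" "a \<in> {1..m}" "a - 1 < a"
      using that am by auto
    then show "g 0 < f (a - 1)"
      using ga monotone_onD[OF f] by simp
    show "g (Suc (a - 1)) < f (a - 1)"
      using assms(7) that by (simp add: Suc_diff_1)
  qed (use that am in auto)
  then have t: "strict_antimono_on {1..m} (f \<circ> Transposition.transpose 0 a)"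
    using strict_antimono_on_transpose[OF f a1 am] \<open>g 0 < f 0\<close> ga by simp
  have q: "Transposition.transpose 0 a \<circ> p permutes {0..m}"
    using am by (intro permutes_compose[OF p] permutes_swap_id) auto
  show "\<forall>j\<le>m. g j = f (Transposition.transpose 0 a j)"
  proof (intro allI impI)
    fix j assume "j \<le> m"
    show "g j = f (Transposition.transpose 0 a j)"
    proof (cases "j = 0")
      case True
      then show ?thesis using ga by simp
    next
      case False
      then have "g j = (f \<circ> Transposition.transpose 0 a) j"
        using strict_antimono_rearrangement_eq[OF t g q _ _ _ \<open>j \<le> m\<close>] gp ga by simp
      then show ?thesis by simp
    qed
  qed
qed

subsection \<open>Weights of the form \<open>\<delta> + \<lambda>\<^sub>K\<close>\<close>

lemma plus_rho_lamK:
  "plus_rho m (\<lambda>j. de j + lamK m K j) j =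
     (if j = 0 then de 0 + real (normK m K) + rho m 0 else de j - real (K j) + rho m j)"
  by (simp add: plus_rho_def lamK_def)

lemma sum_lamK: "(\<Sum>j=0..m. lamK m K j) = 0"
proof -
  have "(\<Sum>j=0..m. lamK m K j) = lamK m K 0 + (\<Sum>j=1..m. lamK m K j)"
    by (simp add: sum.atLeast_Suc_atMost)
  also have "(\<Sum>j=1..m. lamK m K j) = - (\<Sum>j=1..m. real (K j))"
    by (simp add: lamK_def sum_negf)
  finally show ?thesis by (simp add: lamK_def normK_def)
qed

lemma is_weight_add_lamK: "is_weight m de \<Longrightarrow> is_weight m (\<lambda>j. de j + lamK m K j)"
  using sum_lamK[of m K] by (simp add: is_weight_def sum.distrib)

lemma kappa_le:
  "K \<in> kappa m de k \<Longrightarrow> 1 \<le> i \<Longrightarrow> i < m \<Longrightarrow> real (K i) \<le> de i - de (Suc i)"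
  unfolding kappa_def by blast

lemma kappa_eqI:
  assumes "K \<in> kappa m de k" "K' \<in> kappa m de k'"
    and "\<And>j. 1 \<le> j \<Longrightarrow> j \<le> m \<Longrightarrow> K j = K' j"
  shows "K = K'"
proof
  fix j
  show "K j = K' j"
    using assms unfolding kappa_def by (cases "j = 0 \<or> m < j") auto
qed

lemma plus_rho_lamK_head_gap:
  assumes "K \<in> kappa m de k" "K' \<in> kappa m de k'" and "k' < k"
  shows "plus_rho m (\<lambda>j. de j + lamK m K j) 0 - plus_rho m (\<lambda>j. de j + lamK m K' j) 0 - 1 \<in> \<nat>"
proof -
  have "real k - real k' - 1 = real (k - k' - 1)"
    using \<open>k' < k\<close> by (simp add: of_nat_diff)
  then show ?thesis
    using assms(1,2) by (simp add: plus_rho_lamK kappa_def)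
qed

lemma regular_dominant_on_kappa:
  assumes "l_dom_int m de" and "K \<in> kappa m de k"
  shows "regular_dominant_on {1..<m} (plus_rho m (\<lambda>j. de j + lamK m K j))"
  unfolding regular_dominant_on_def
proof
  let ?\<sigma> = "plus_rho m (\<lambda>j. de j + lamK m K j)"
  fix i assume i: "i \<in> {1..<m}"
  obtain n where n: "de i - de (Suc i) = real n"
    using assms(1) i unfolding l_dom_int_def by (auto elim: Nats_cases)
  have "K i \<le> n"
    using kappa_le[OF assms(2), of i] i n by simp
  then have "?\<sigma> i - ?\<sigma> (Suc i) - 1 = real (n - K i + K (Suc i))"
    using i n by (simp add: plus_rho_lamK rho_def of_nat_diff)
  then show "?\<sigma> i - ?\<sigma> (Suc i) - 1 \<in> \<nat>"
    by simp
qed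

lemma same_inf_char_kappa_transpose:
  assumes dom: "l_dom_int m de" and "k' \<le> k"
    and K: "K \<in> kappa m de k" and K': "K' \<in> kappa m de k'" and "K \<noteq> K'"
    and "same_inf_char m (\<lambda>j. de j + lamK m K j) (\<lambda>j. de j + lamK m K' j)"
  obtains a where "k' < k" "1 \<le> a" "a \<le> m"
    "\<forall>j\<le>m. plus_rho m (\<lambda>j. de j + lamK m K' j) j
       = plus_rho m (\<lambda>j. de j + lamK m K j) (Transposition.transpose 0 a j)"
proof -
  define s where "s = plus_rho m (\<lambda>j. de j + lamK m K j)"
  define s' where "s' = plus_rho m (\<lambda>j. de j + lamK m K' j)"
  obtain p where p: "p permutes {0..m}" and ps: "\<forall>l\<le>m. s' l = s (p l)"
    using assms(6) unfolding same_inf_char_def s_def s'_def plus_rho_def by blast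
  have dec: "strict_antimono_on {1..m} s" "strict_antimono_on {1..m} s'"
    unfolding s_def s'_def
    using regular_dominant_on_kappa[OF dom K] regular_dominant_on_kappa[OF dom K']
    by (simp_all add: regular_dominant_on_imp_strict_antimono_on)
  have s0: "s 0 = de 0 + real k + rho m 0" "s' 0 = de 0 + real k' + rho m 0"
    using K K' by (simp_all add: s_def s'_def plus_rho_lamK kappa_def)
  have "k' < k"
  proof (rule ccontr)
    assume "\<not> k' < k"
    with \<open>k' \<le> k\<close> have "s' 0 = s 0"
      using s0 by simp
    then have "s' j = s j" if "1 \<le> j" "j \<le> m" for j
      using strict_antimono_rearrangement_eq[OF dec p ps _ that] by simp
    then have "K = K'"
      by (intro kappa_eqI[OF K K']) (simp add: s_def s'_def plus_rho_lamK)
    with \<open>K \<noteq> K'\<close> show False ..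
  qed
  moreover have "s' (p 0) < s (p 0 - 1)" if "2 \<le> p 0"
  proof -
    have "p 0 \<le> m"
      using permutes_in_image[OF p, of 0] by simp
    then have "real (K (p 0 - 1)) \<le> de (p 0 - 1) - de (p 0)"
      using kappa_le[OF K, of "p 0 - 1"] that by simp
    then show ?thesis
      using that by (simp add: s_def s'_def plus_rho_lamK rho_def of_nat_diff)
  qed
  moreover have "s' 0 < s 0"
    using s0 \<open>k' < k\<close> by simp
  ultimately show ?thesis
    using rearrangement_eq_transpose[OF dec p ps refl] that unfolding s_def s'_def by blast
qed

lemma l_dom_int_antimono:
  assumes "l_dom_int m de" "1 \<le> i" "i \<le> j" "j \<le> m"
  shows "de j \<le> de i"
proof (rule lift_Suc_antimono_le_ivl[of "{1..<m}"])
  fix n assume "n \<in> {1..<m}"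
  then have "de n - de (Suc n) \<in> \<nat>"
    using assms(1) unfolding l_dom_int_def by simp
  then obtain r where "de n - de (Suc n) = real r"
    by (rule Nats_cases)
  then show "de (Suc n) \<le> de n" by simp
qed (use assms in auto)

lemma idelta_le:
  assumes "1 \<le> m" "1 \<le> a" "a \<le> m" and "a < m \<Longrightarrow> de (Suc a) \<noteq> de a"
  shows "idelta m de \<le> a"
proof (rule ccontr)
  define P where "P = (\<lambda>i. 1 \<le> i \<and> i \<le> m \<and> (\<forall>j. 1 \<le> j \<and> j \<le> i \<longrightarrow> de j = de 1))"
  have "P 1"
    unfolding P_def
  proof (intro conjI allI impI)
    fix j :: nat assume "1 \<le> j \<and> j \<le> 1"
    then have "j = 1" by linarith
    then show "de j = de 1" by simp
  qed (use \<open>1 \<le> m\<close> in simp_all)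
  then have "P (Greatest P)"
    by (rule GreatestI_nat[of P 1 m]) (simp add: P_def)
  moreover have "idelta m de = Greatest P"
    unfolding idelta_def P_def by (rule refl)
  ultimately have "P (idelta m de)"
    by simp
  then have flat: "\<And>j. 1 \<le> j \<Longrightarrow> j \<le> idelta m de \<Longrightarrow> de j = de 1"
    and "idelta m de \<le> m"
    unfolding P_def by blast+
  assume "\<not> idelta m de \<le> a"
  then have "a < m" and "de a = de 1" and "de (Suc a) = de 1"
    using flat[of a] flat[of "Suc a"] \<open>idelta m de \<le> m\<close> assms(2) by linarith+
  with assms(4) show False by simp
qed

lemma idelta_k_eqI:
  assumes "l_dom_int m de" "idelta m de \<le> a" "1 \<le> a" "a \<le> m" "real k \<le> dtilde de a"
    and "a < m \<Longrightarrow> dtilde de a < real k + 1 + (de a - de (Suc a))"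
  shows "idelta_k m de k = a"
  unfolding idelta_k_def
proof (rule Greatest_equality)
  show "idelta m de \<le> a \<and> a \<le> m \<and> real k \<le> dtilde de a"
    using assms(2,4,5) by blast
next
  fix y assume y: "idelta m de \<le> y \<and> y \<le> m \<and> real k \<le> dtilde de y"
  show "y \<le> a"
  proof (rule ccontr)
    assume "\<not> y \<le> a"
    then have "Suc a \<le> y" "a < m" using y by simp_all
    then have "de y \<le> de (Suc a)" "real (Suc a) \<le> real y"
      using l_dom_int_antimono[OF assms(1), of "Suc a" y] y by simp_all
    then have "dtilde de y < real k"
      using assms(6)[OF \<open>a < m\<close>] unfolding dtilde_def by simp
    with y show False by simp
  qed
qed

lemma idelta_k_kappa_transpose:
  assumes "1 \<le> m" and dom: "l_dom_int m de"
    and K: "K \<in> kappa m de k" and K': "K' \<in> kappa m de k'" and "K \<noteq> K'"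
    and a: "1 \<le> a" "a \<le> m"
    and swap: "\<forall>j\<le>m. plus_rho m (\<lambda>j. de j + lamK m K' j) j
                  = plus_rho m (\<lambda>j. de j + lamK m K j) (Transposition.transpose 0 a j)"
  shows "idelta_k m de k = a"
proof -
  have agree: "K j = K' j" if "1 \<le> j" "j \<le> m" "j \<noteq> a" for j
    using swap[rule_format, of j] that by (simp add: plus_rho_lamK)
  have K'a: "dtilde de a = real k + real (K' a)"
    using swap[rule_format, of a] K a by (simp add: plus_rho_lamK kappa_def dtilde_def rho_def)
  have bound: "real (K a) \<le> de a - de (Suc a)" "real (K' a) \<le> de a - de (Suc a)" if "a < m"
    using kappa_le[OF K] kappa_le[OF K'] that a by simp_all
  show ?thesis
  proof (rule idelta_k_eqI[OF dom _ a])
    show "idelta m de \<le> a"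
    proof (rule idelta_le[OF \<open>1 \<le> m\<close> a])
      assume "a < m"
      show "de (Suc a) \<noteq> de a"
      proof
        assume "de (Suc a) = de a"
        then have "K a = K' a"
          using bound[OF \<open>a < m\<close>] by simp
        then have "K = K'"
          using kappa_eqI[OF K K'] agree by metis
        with \<open>K \<noteq> K'\<close> show False ..
      qed
    qed
  qed (use K'a bound in auto)
qed

theorem mainTheorem12:
  fixes m k k' :: nat and de :: "nat \<Rightarrow> real" and K K' :: "nat \<Rightarrow> nat"
  assumes "1 \<le> m"
    and "is_weight m de" and "l_dom_int m de"
    and "k' \<le> k"
    and "K \<in> kappa m de k" and "K' \<in> kappa m de k'" and "K \<noteq> K'"
    and "same_inf_char m (\<lambda>j. de j + lamK m K j) (\<lambda>j. de j + lamK m K' j)"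
  shows "\<exists>mu. is_weight m mu \<and> a_dom_int m mu \<and>
           weq m (\<lambda>j. de j + lamK m K j) (wshift m mu (idelta_k m de k - 1)) \<and>
           weq m (\<lambda>j. de j + lamK m K' j) (wshift m mu (idelta_k m de k))"
proof -
  obtain a where "k' < k" and a: "1 \<le> a" "a \<le> m"
    and swap: "\<forall>j\<le>m. plus_rho m (\<lambda>j. de j + lamK m K' j) j
                 = plus_rho m (\<lambda>j. de j + lamK m K j) (Transposition.transpose 0 a j)"
    using same_inf_char_kappa_transpose[OF assms(3-8)] by blast
  have "idelta_k m de k = a"
    using idelta_k_kappa_transpose[OF assms(1,3,5-7) a swap] .
  moreover have "\<exists>mu. is_weight m mu \<and> a_dom_int m mu \<and>
      weq m (\<lambda>j. de j + lamK m K j) (wshift m mu (a - 1)) \<and>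
      weq m (\<lambda>j. de j + lamK m K' j) (wshift m mu a)"
    using ex_a_dom_int_wshift_transpose[OF is_weight_add_lamK[OF assms(2)] a
        regular_dominant_on_kappa[OF assms(3,5)] regular_dominant_on_kappa[OF assms(3,6)] swap
        plus_rho_lamK_head_gap[OF assms(5,6) \<open>k' < k\<close>]] .
  ultimately show ?thesis by simp
qed

end
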